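(* Let ${\rm Bin}(m,\theta)$ be a binomially distributed random variable with parameters $m\in\mathbb{N}$ and $\theta\in(0,1)$. Then $${\rm Var}\bigl(({\rm Bin}(m,\theta)-1)_+\bigr)={\rm Var}\bigl({\rm Bin}(m,\theta)-\mathbbm{1}_{\{{\rm Bin}(m,\theta)\ge1\}}\bigr)\le(m\theta)^2.$$
   Context: $x_+=\max(x,0)$. *)

theory Defs
  imports "HOL-Probability.Probability"
begin

end

theory Submission
  imports Defs
begin

text \<open>The variance of \<open>Y = (X - 1)\<^sub>+\<close> is at most \<open>E[Y\<^sup>2]\<close>, and \<open>Y\<^sup>2 \<le> X (X - 1)\<close>
  pointwise on the naturals; the second factorial moment \<open>E[X (X - 1)] = m (m - 1) \<theta>\<^sup>2\<close>
  of the binomial distribution follows by induction on \<open>m\<close>, splitting off the first trial.\<close>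

lemma (in prob_space) variance_le_expectation_square:
  fixes X :: "'a \<Rightarrow> real"
  assumes "integrable M X" and "integrable M (\<lambda>x. (X x)\<^sup>2)"
  shows "variance X \<le> expectation (\<lambda>x. (X x)\<^sup>2)"
  using variance_eq[OF assms] by simp

lemma expectation_binomial_pmf_Suc:
  fixes f :: "nat \<Rightarrow> real"
  assumes p: "p \<in> {0..1}"
  shows "measure_pmf.expectation (binomial_pmf (Suc n) p) f
       = p * measure_pmf.expectation (binomial_pmf n p) (\<lambda>k. f (Suc k))
         + (1 - p) * measure_pmf.expectation (binomial_pmf n p) f"
proof -
  have "binomial_pmf (Suc n) p
      = bernoulli_pmf p \<bind> (\<lambda>b. map_pmf (\<lambda>k. (if b then 1 else 0) + k) (binomial_pmf n p))"
    by (simp add: binomial_pmf_Suc[OF p] map_pmf_def)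
  then have "measure_pmf.expectation (binomial_pmf (Suc n) p) f
      = (\<Sum>b\<in>UNIV. pmf (bernoulli_pmf p) b
           * measure_pmf.expectation (binomial_pmf n p) (\<lambda>k. f ((if b then 1 else 0) + k)))"
    using p by (simp add: pmf_expectation_bind[where A = UNIV] finite_set_pmf_binomial_pmf)
  then show ?thesis
    using p by (simp add: UNIV_bool)
qed

lemma expectation_binomial_pmf_real:
  assumes p: "p \<in> {0..1}"
  shows "measure_pmf.expectation (binomial_pmf n p) real = real n * p"
proof (induction n)
  case 0
  then show ?case using p by (simp add: binomial_pmf_0)
next
  case (Suc n)
  have "measure_pmf.expectation (binomial_pmf n p) (\<lambda>k. real (Suc k)) = real n * p + 1"
    using Suc p by simp
  then show ?case
    using Suc p by (simp add: expectation_binomial_pmf_Suc algebra_simps)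
qed

lemma expectation_binomial_pmf_falling_factorial:
  assumes p: "p \<in> {0..1}"
  shows "measure_pmf.expectation (binomial_pmf n p) (\<lambda>k. real k * (real k - 1))
       = real n * (real n - 1) * p\<^sup>2"
proof (induction n)
  case 0
  then show ?case using p by (simp add: binomial_pmf_0)
next
  case (Suc n)
  have "measure_pmf.expectation (binomial_pmf n p) (\<lambda>k. real (Suc k) * (real (Suc k) - 1))
      = measure_pmf.expectation (binomial_pmf n p) (\<lambda>k. real k * (real k - 1) + 2 * real k)"
    by (simp add: algebra_simps)
  also have "\<dots> = real n * (real n - 1) * p\<^sup>2 + 2 * (real n * p)"
    using Suc p by (simp add: expectation_binomial_pmf_real)
  finally show ?case
    using Suc p by (simp add: expectation_binomial_pmf_Suc power2_eq_square algebra_simps)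
qed

lemma pos_part_pred_square_le: "(max (real k - 1) 0)\<^sup>2 \<le> real k * (real k - 1)"
  by (cases k) (auto simp: max_def power2_eq_square algebra_simps)

theorem lemma6p4:
  fixes m :: nat and \<theta> :: real
  assumes "0 < \<theta>" and "\<theta> < 1"
  shows "measure_pmf.variance (binomial_pmf m \<theta>) (\<lambda>k. max (real k - 1) 0)
           = measure_pmf.variance (binomial_pmf m \<theta>) (\<lambda>k. real k - (if k \<ge> 1 then 1 else 0))
       \<and> measure_pmf.variance (binomial_pmf m \<theta>) (\<lambda>k. max (real k - 1) 0) \<le> (real m * \<theta>)^2"
proof
  have "(\<lambda>k. max (real k - 1) 0) = (\<lambda>k::nat. real k - (if k \<ge> 1 then 1 else 0))"
    by (auto simp: max_def)
  then show "measure_pmf.variance (binomial_pmf m \<theta>) (\<lambda>k. max (real k - 1) 0)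
           = measure_pmf.variance (binomial_pmf m \<theta>) (\<lambda>k. real k - (if k \<ge> 1 then 1 else 0))"
    by (rule arg_cong)
next
  have p: "\<theta> \<in> {0..1}" using assms by auto
  let ?Y = "\<lambda>k::nat. max (real k - 1) 0"
  have "measure_pmf.variance (binomial_pmf m \<theta>) ?Y
      \<le> measure_pmf.expectation (binomial_pmf m \<theta>) (\<lambda>k. (?Y k)\<^sup>2)"
    using p by (intro measure_pmf.variance_le_expectation_square) auto
  also have "\<dots> \<le> measure_pmf.expectation (binomial_pmf m \<theta>) (\<lambda>k. real k * (real k - 1))"
    using p by (intro integral_mono pos_part_pred_square_le) auto
  also have "\<dots> = real m * (real m - 1) * \<theta>\<^sup>2"
    using p by (rule expectation_binomial_pmf_falling_factorial)
  also have "\<dots> \<le> (real m * \<theta>)\<^sup>2"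
    using p by (simp add: power2_eq_square algebra_simps)
  finally show "measure_pmf.variance (binomial_pmf m \<theta>) ?Y \<le> (real m * \<theta>)^2" .
qed

end
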